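(* Let $k$ be a kernel on $\mathcal{X}$, $\sigma>0$, $f\in\mathcal{H}_k$, $g\in\mathcal{H}_{\sigma^2\delta}$, $h=f+g\in\mathcal{H}_{k^\sigma}$. Let $x_1,\dots,x_t\in\mathcal{X}$ be pairwise distinct with observations $y_i=h(x_i)$. Then for every $x\in\mathcal{X}\setminus\{x_1,\dots,x_t\}$, $$|\widehat m_t(x)-f(x)|\le\|h\|_{\mathcal{H}_{k^\sigma}}\widehat\sigma_t(x)+\big(\|h\|_{\mathcal{H}_{k^\sigma}}+\|g\|_{\mathcal{H}_{\sigma^2\delta}}\big)\sigma.$$
   Context: $\delta(x,y)=1$ if $x=y$, else $0$; $k^\sigma=k+\sigma^2\delta$; $\mathcal{H}_{\sigma^2\delta}$ is the RKHS of $\sigma^2\delta$. $\mathbf{k}_t(x)=[k(x,x_i)]_{i\le t}$, $\mathbf{K}_t=[k(x_i,x_j)]_{i,j\le t}$, $\mathbf{y}_t=[y_i]_{i\le t}$, $\widehat m_t(x)=\mathbf{k}_t(x)^T(\mathbf{K}_t+\sigma^2I)^{-1}\mathbf{y}_t$, $\widehat\sigma_t^2(x)=k(x,x)-\mathbf{k}_t(x)^T(\mathbf{K}_t+\sigma^2I)^{-1}\mathbf{k}_t(x)$. *)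

theory Defs
  imports "HOL-Analysis.Analysis"
begin

definition delta :: "'a \<Rightarrow> 'a \<Rightarrow> real" where
  "delta x y = (if x = y then 1 else 0)"

definition is_kernel :: "('a \<Rightarrow> 'a \<Rightarrow> real) \<Rightarrow> bool" where
  "is_kernel k \<longleftrightarrow> (\<forall>x y. k x y = k y x) \<and>
     (\<forall>(xs :: 'a list) (cs :: real list). length cs = length xs \<longrightarrow>
        (\<Sum>i<length xs. \<Sum>j<length xs. cs!i * cs!j * k (xs!i) (xs!j)) \<ge> 0)"

definition is_RKHS :: "('a \<Rightarrow> 'a \<Rightarrow> real) \<Rightarrow> ('a \<Rightarrow> real) set
      \<Rightarrow> (('a \<Rightarrow> real) \<Rightarrow> ('a \<Rightarrow> real) \<Rightarrow> real) \<Rightarrow> bool" where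
  "is_RKHS k H ip \<longleftrightarrow>
     (\<lambda>_. 0) \<in> H \<and>
     (\<forall>f\<in>H. \<forall>g\<in>H. (\<lambda>z. f z + g z) \<in> H) \<and>
     (\<forall>f\<in>H. \<forall>c::real. (\<lambda>z. c * f z) \<in> H) \<and>
     (\<forall>f\<in>H. \<forall>g\<in>H. ip f g = ip g f) \<and>
     (\<forall>f\<in>H. \<forall>g\<in>H. \<forall>u\<in>H. ip (\<lambda>z. f z + g z) u = ip f u + ip g u) \<and>
     (\<forall>f\<in>H. \<forall>g\<in>H. \<forall>c::real. ip (\<lambda>z. c * f z) g = c * ip f g) \<and>
     (\<forall>f\<in>H. ip f f \<ge> 0) \<and>
     (\<forall>f\<in>H. ip f f = 0 \<longrightarrow> f = (\<lambda>_. 0)) \<and>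
     (\<forall>F :: nat \<Rightarrow> ('a \<Rightarrow> real). (\<forall>n. F n \<in> H) \<longrightarrow>
        (\<forall>e>0. \<exists>N. \<forall>m\<ge>N. \<forall>n\<ge>N. ip (\<lambda>z. F m z - F n z) (\<lambda>z. F m z - F n z) < e) \<longrightarrow>
        (\<exists>L\<in>H. (\<lambda>n. ip (\<lambda>z. F n z - L z) (\<lambda>z. F n z - L z)) \<longlonglongrightarrow> 0)) \<and>
     (\<forall>x. (\<lambda>y. k y x) \<in> H) \<and>
     (\<forall>f\<in>H. \<forall>x. ip f (\<lambda>y. k y x) = f x)"

definition rkhs_norm :: "(('a \<Rightarrow> real) \<Rightarrow> ('a \<Rightarrow> real) \<Rightarrow> real) \<Rightarrow> ('a \<Rightarrow> real) \<Rightarrow> real" where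
  "rkhs_norm ip f = sqrt (ip f f)"

definition kvec :: "('a \<Rightarrow> 'a \<Rightarrow> real) \<Rightarrow> ('n::finite \<Rightarrow> 'a) \<Rightarrow> 'a \<Rightarrow> real^'n" where
  "kvec k xs x = (\<chi> i. k x (xs i))"

definition Kmat :: "('a \<Rightarrow> 'a \<Rightarrow> real) \<Rightarrow> ('n::finite \<Rightarrow> 'a) \<Rightarrow> real^'n^'n" where
  "Kmat k xs = (\<chi> i j. k (xs i) (xs j))"

definition post_mean :: "('a \<Rightarrow> 'a \<Rightarrow> real) \<Rightarrow> real \<Rightarrow> ('n::finite \<Rightarrow> 'a) \<Rightarrow> real^'n \<Rightarrow> 'a \<Rightarrow> real" where
  "post_mean k \<sigma> xs y x =
     kvec k xs x \<bullet> (matrix_inv (Kmat k xs + \<sigma>\<^sup>2 *\<^sub>R mat 1) *v y)"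

definition post_var :: "('a \<Rightarrow> 'a \<Rightarrow> real) \<Rightarrow> real \<Rightarrow> ('n::finite \<Rightarrow> 'a) \<Rightarrow> 'a \<Rightarrow> real" where
  "post_var k \<sigma> xs x =
     k x x - kvec k xs x \<bullet> (matrix_inv (Kmat k xs + \<sigma>\<^sup>2 *\<^sub>R mat 1) *v kvec k xs x)"

end

theory Submission
  imports Defs
begin

text \<open>Let \<open>w = (K + \<sigma>\<^sup>2 I)\<^sup>-\<^sup>1 k\<^sub>t(x)\<close> be the posterior weights, so that the posterior mean is
  \<open>w \<bullet> y\<close>. In the RKHS of \<open>k + \<sigma>\<^sup>2\<delta>\<close> the residual \<open>e = k\<^sup>\<sigma>(-,x) - \<Sum>\<^sub>i w\<^sub>i k\<^sup>\<sigma>(-,x\<^sub>i)\<close> represents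
  the error: \<open>\<langle>h, e\<rangle> = h(x) - w \<bullet> y\<close>. The normal equations \<open>(K + \<sigma>\<^sup>2 I) w = k\<^sub>t(x)\<close> make \<open>e\<close>
  vanish at every \<open>x\<^sub>i\<close>, because \<open>\<delta>\<close> separates the distinct \<open>x\<^sub>i\<close> from each other and from
  \<open>x\<close>; hence \<open>\<parallel>e\<parallel>\<^sup>2 = e(x) = \<sigma>\<^sub>t(x)\<^sup>2 + \<sigma>\<^sup>2\<close>, and Cauchy--Schwarz bounds \<open>|h(x) - w \<bullet> y|\<close> by
  \<open>\<parallel>h\<parallel> (\<sigma>\<^sub>t(x) + \<sigma>)\<close>. The remaining error \<open>g(x) = \<langle>g, \<sigma>\<^sup>2\<delta>(-,x)\<rangle>\<close> is at most \<open>\<parallel>g\<parallel> \<sigma>\<close>.\<close>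

lemma quadratic_form_nonneg_discriminant:
  fixes A B C :: real
  assumes nonneg: "\<And>a b. 0 \<le> a * a * A + 2 * a * b * C + b * b * B"
  shows "C * C \<le> A * B"
proof (cases "B = 0")
  case True
  have "C = 0"
  proof (rule ccontr)
    assume "C \<noteq> 0"
    with nonneg[of 1 "- (A + 1) / (2 * C)"] True show False by (simp add: field_simps)
  qed
  with True show ?thesis by simp
next
  case False
  have "0 \<le> B" using nonneg[of 0 1] by simp
  moreover have "0 \<le> B * (A * B - C * C)"
    using nonneg[of B "- C"] by (simp add: algebra_simps)
  ultimately show ?thesis using False by (simp add: zero_le_mult_iff)
qed

lemma invertible_psd_plus_scaled_id:
  fixes A :: "real^'n^'n"
  assumes psd: "\<And>v. 0 \<le> v \<bullet> (A *v v)" and "s > 0"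
  shows "invertible (A + s *\<^sub>R mat 1)"
  unfolding invertible_left_inverse matrix_left_invertible_ker
proof (intro allI impI)
  fix v assume "(A + s *\<^sub>R mat 1) *v v = 0"
  then have "A *v v = - (s *\<^sub>R v)"
    by (simp add: matrix_vector_mult_add_rdistrib scaleR_matrix_vector_assoc[symmetric] add_eq_0_iff)
  then have "s * (v \<bullet> v) \<le> 0" using psd[of v] by simp
  then have "v \<bullet> v \<le> 0" using \<open>s > 0\<close> by (simp add: mult_le_0_iff)
  then show "v = 0" by (metis antisym inner_eq_zero_iff inner_ge_zero)
qed

lemma matrix_inv_right: "invertible A \<Longrightarrow> A ** matrix_inv A = mat 1"
  unfolding invertible_def matrix_inv_def by (metis (mono_tags, lifting) someI_ex)

definition residual :: "('a \<Rightarrow> 'a \<Rightarrow> real) \<Rightarrow> ('n::finite \<Rightarrow> 'a) \<Rightarrow> real^'n \<Rightarrow> 'a \<Rightarrow> 'a \<Rightarrow> real" where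
  "residual K xs w x = (\<lambda>z. K z x - (\<Sum>i\<in>UNIV. w $ i * K z (xs i)))"

locale rkhs =
  fixes K :: "'a \<Rightarrow> 'a \<Rightarrow> real" and H :: "('a \<Rightarrow> real) set"
    and ip :: "('a \<Rightarrow> real) \<Rightarrow> ('a \<Rightarrow> real) \<Rightarrow> real"
  assumes is_RKHS: "is_RKHS K H ip"
begin

lemma zero_mem: "(\<lambda>_. 0) \<in> H"
  and add_mem: "f \<in> H \<Longrightarrow> g \<in> H \<Longrightarrow> (\<lambda>z. f z + g z) \<in> H"
  and scale_mem: "f \<in> H \<Longrightarrow> (\<lambda>z. c * f z) \<in> H"
  and ip_sym: "f \<in> H \<Longrightarrow> g \<in> H \<Longrightarrow> ip f g = ip g f"
  and ip_add_left: "f \<in> H \<Longrightarrow> g \<in> H \<Longrightarrow> u \<in> H \<Longrightarrow> ip (\<lambda>z. f z + g z) u = ip f u + ip g u"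
  and ip_scale_left: "f \<in> H \<Longrightarrow> g \<in> H \<Longrightarrow> ip (\<lambda>z. c * f z) g = c * ip f g"
  and ip_self_nonneg: "f \<in> H \<Longrightarrow> 0 \<le> ip f f"
  and section_mem: "(\<lambda>y. K y x) \<in> H"
  and reproducing: "f \<in> H \<Longrightarrow> ip f (\<lambda>y. K y x) = f x"
  using is_RKHS unfolding is_RKHS_def by blast+

lemma kernel_sym: "K u v = K v u"
  using reproducing[OF section_mem, of v u] reproducing[OF section_mem, of u v]
    ip_sym[OF section_mem section_mem, of v u] by simp

lemma ip_diff_left:
  assumes "f \<in> H" "g \<in> H" "u \<in> H"
  shows "ip (\<lambda>z. f z - g z) u = ip f u - ip g u"
proof -
  have "ip (\<lambda>z. f z - g z) u = ip (\<lambda>z. f z + (-1) * g z) u" by simp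
  also have "\<dots> = ip f u - ip g u"
    using ip_add_left[OF assms(1) scale_mem[OF assms(2), of "-1"] assms(3)]
      ip_scale_left[OF assms(2,3), of "-1"] by simp
  finally show ?thesis .
qed

lemma ip_lincomb_self:
  assumes f: "f \<in> H" and g: "g \<in> H"
  shows "ip (\<lambda>z. a * f z + b * g z) (\<lambda>z. a * f z + b * g z)
           = a * a * ip f f + 2 * a * b * ip f g + b * b * ip g g"
proof -
  have af: "(\<lambda>z. a * f z) \<in> H" and bg: "(\<lambda>z. b * g z) \<in> H"
    using scale_mem f g by auto
  have s: "(\<lambda>z. a * f z + b * g z) \<in> H" using add_mem[OF af bg] .
  have "ip (\<lambda>z. a * f z + b * g z) (\<lambda>z. a * f z + b * g z)
      = a * ip (\<lambda>z. a * f z + b * g z) f + b * ip (\<lambda>z. a * f z + b * g z) g"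
    using ip_add_left[OF af bg s] ip_scale_left[OF f s] ip_scale_left[OF g s] ip_sym f g s
    by simp
  also have "\<dots> = a * (a * ip f f + b * ip g f) + b * (a * ip f g + b * ip g g)"
    using ip_add_left[OF af bg] ip_scale_left f g by simp
  finally show ?thesis using ip_sym[OF f g] by (simp add: algebra_simps)
qed

lemma sum_sections_mem: "finite S \<Longrightarrow> (\<lambda>z. \<Sum>i\<in>S. c i * K z (p i)) \<in> H"
  by (induction S rule: finite_induct) (simp_all add: zero_mem add_mem scale_mem section_mem)

lemma ip_sum_sections_left:
  assumes "finite S" and w: "w \<in> H"
  shows "ip (\<lambda>z. \<Sum>i\<in>S. c i * K z (p i)) w = (\<Sum>i\<in>S. c i * w (p i))"
  using assms(1)
proof (induction S rule: finite_induct)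
  case empty
  show ?case using ip_scale_left[OF w w, of 0] by simp
next
  case (insert a S)
  have ka: "(\<lambda>z. c a * K z (p a)) \<in> H" by (rule scale_mem[OF section_mem])
  have "ip (\<lambda>z. c a * K z (p a)) w = c a * w (p a)"
    using ip_scale_left[OF section_mem w] ip_sym[OF section_mem w] reproducing[OF w] by simp
  then show ?case
    using ip_add_left[OF ka sum_sections_mem[OF insert(1)] w] insert by simp
qed

lemma gram_quadratic_nonneg:
  assumes "finite S"
  shows "0 \<le> (\<Sum>i\<in>S. \<Sum>j\<in>S. c i * c j * K (p i) (p j))"
proof -
  let ?u = "\<lambda>z. \<Sum>j\<in>S. c j * K z (p j)"
  have "0 \<le> ip ?u ?u" using ip_self_nonneg[OF sum_sections_mem[OF assms]] .
  also have "\<dots> = (\<Sum>i\<in>S. c i * (\<Sum>j\<in>S. c j * K (p i) (p j)))"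
    using ip_sum_sections_left[OF assms sum_sections_mem[OF assms]] .
  finally show ?thesis by (simp add: sum_distrib_left mult.assoc)
qed

lemma cauchy_schwarz:
  assumes "f \<in> H" "g \<in> H"
  shows "\<bar>ip f g\<bar> \<le> rkhs_norm ip f * rkhs_norm ip g"
proof -
  have "0 \<le> a * a * ip f f + 2 * a * b * ip f g + b * b * ip g g" for a b
    using ip_lincomb_self[OF assms, of a b]
      ip_self_nonneg[OF add_mem[OF scale_mem[OF assms(1), of a] scale_mem[OF assms(2), of b]]] by simp
  then have "ip f g * ip f g \<le> ip f f * ip g g" by (rule quadratic_form_nonneg_discriminant)
  then show ?thesis
    unfolding rkhs_norm_def by (metis real_sqrt_abs2 real_sqrt_le_mono real_sqrt_mult)
qed

lemma rkhs_norm_nonneg: "f \<in> H \<Longrightarrow> 0 \<le> rkhs_norm ip f"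
  by (simp add: rkhs_norm_def ip_self_nonneg)

lemma abs_eval_le: "f \<in> H \<Longrightarrow> \<bar>f x\<bar> \<le> rkhs_norm ip f * sqrt (K x x)"
  using cauchy_schwarz[OF _ section_mem, of f x] reproducing[OF section_mem, of x x]
  by (simp add: reproducing rkhs_norm_def)

lemma residual_mem: "residual K xs w x \<in> H"
  unfolding residual_def
  using add_mem[OF section_mem scale_mem[OF sum_sections_mem[OF finite], of "-1"]] by simp

lemma ip_residual_right:
  assumes u: "u \<in> H"
  shows "ip u (residual K xs w x) = u x - (\<Sum>i\<in>UNIV. w $ i * u (xs i))"
proof -
  have "ip u (residual K xs w x) = ip (residual K xs w x) u"
    using ip_sym[OF u residual_mem] .
  also have "\<dots> = ip (\<lambda>z. K z x) u - ip (\<lambda>z. \<Sum>i\<in>UNIV. w $ i * K z (xs i)) u"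
    unfolding residual_def by (rule ip_diff_left[OF section_mem sum_sections_mem[OF finite] u])
  finally show ?thesis
    using ip_sym[OF section_mem u] reproducing[OF u] ip_sum_sections_left[OF finite u] by simp
qed

lemma invertible_Kmat_plus_scaled_id:
  fixes xs :: "'n::finite \<Rightarrow> 'a"
  assumes "s > 0"
  shows "invertible (Kmat K xs + s *\<^sub>R mat 1)"
proof (rule invertible_psd_plus_scaled_id[OF _ assms])
  fix v :: "real^'n"
  have "v \<bullet> (Kmat K xs *v v) = (\<Sum>i\<in>UNIV. \<Sum>j\<in>UNIV. v $ i * v $ j * K (xs i) (xs j))"
    by (simp add: inner_vec_def Kmat_def matrix_vector_mult_def sum_distrib_left algebra_simps)
  then show "0 \<le> v \<bullet> (Kmat K xs *v v)" using gram_quadratic_nonneg[OF finite] by simp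
qed

end

definition post_weights :: "('a \<Rightarrow> 'a \<Rightarrow> real) \<Rightarrow> real \<Rightarrow> ('n::finite \<Rightarrow> 'a) \<Rightarrow> 'a \<Rightarrow> real^'n" where
  "post_weights k \<sigma> xs x = matrix_inv (Kmat k xs + \<sigma>\<^sup>2 *\<^sub>R mat 1) *v kvec k xs x"

lemma Kmat_plus_scaled_id_mult:
  "((Kmat k xs + s *\<^sub>R mat 1) *v v) $ i = (\<Sum>j\<in>UNIV. k (xs i) (xs j) * v $ j) + s * v $ i"
proof -
  have "(Kmat k xs + s *\<^sub>R mat 1) *v v = Kmat k xs *v v + s *\<^sub>R v"
    by (simp add: matrix_vector_mult_add_rdistrib scaleR_matrix_vector_assoc[symmetric])
  then show ?thesis by (simp add: Kmat_def matrix_vector_mult_def)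
qed

lemma Kmat_mult_post_weights:
  assumes "invertible (Kmat k xs + \<sigma>\<^sup>2 *\<^sub>R mat 1)"
  shows "(Kmat k xs + \<sigma>\<^sup>2 *\<^sub>R mat 1) *v post_weights k \<sigma> xs x = kvec k xs x"
  unfolding post_weights_def matrix_vector_mul_assoc matrix_inv_right[OF assms] by simp

lemma post_weights_normal_eq:
  assumes "invertible (Kmat k xs + \<sigma>\<^sup>2 *\<^sub>R mat 1)"
  shows "(\<Sum>i\<in>UNIV. k (xs j) (xs i) * post_weights k \<sigma> xs x $ i) + \<sigma>\<^sup>2 * post_weights k \<sigma> xs x $ j
           = k x (xs j)"
  using arg_cong[OF Kmat_mult_post_weights[OF assms], of "\<lambda>v. v $ j"]
  by (simp add: Kmat_plus_scaled_id_mult kvec_def)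

lemma post_mean_eq_weights:
  assumes ksym: "\<And>u v. k u v = k v u" and inv: "invertible (Kmat k xs + \<sigma>\<^sup>2 *\<^sub>R mat 1)"
  shows "post_mean k \<sigma> xs y x = post_weights k \<sigma> xs x \<bullet> y"
proof -
  define M where "M = Kmat k xs + \<sigma>\<^sup>2 *\<^sub>R mat 1"
  define w where "w = post_weights k \<sigma> xs x"
  have "transpose M = M"
    by (simp add: M_def Kmat_def transpose_def mat_def vec_eq_iff ksym eq_commute)
  then have "kvec k xs x = w v* M"
    using Kmat_mult_post_weights[OF inv] transpose_matrix_vector[of M w] by (simp add: M_def w_def)
  then have "post_mean k \<sigma> xs y x = (w v* M) \<bullet> (matrix_inv M *v y)"
    by (simp add: post_mean_def M_def)
  also have "\<dots> = w \<bullet> y"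
    using inv by (simp add: dot_lmul_matrix matrix_vector_mul_assoc matrix_inv_right M_def)
  finally show ?thesis by (simp add: w_def)
qed

lemma post_var_eq_residual: "post_var k \<sigma> xs x = residual k xs (post_weights k \<sigma> xs x) x x"
  by (simp add: post_var_def residual_def post_weights_def kvec_def inner_vec_def mult.commute)

lemma residual_post_weights_at_data:
  assumes ksym: "\<And>u v. k u v = k v u" and inv: "invertible (Kmat k xs + \<sigma>\<^sup>2 *\<^sub>R mat 1)"
  shows "residual k xs (post_weights k \<sigma> xs x) x (xs j) = \<sigma>\<^sup>2 * post_weights k \<sigma> xs x $ j"
  using post_weights_normal_eq[OF inv, of j x]
  by (simp add: residual_def ksym[of x] mult.commute)

lemma residual_plus_delta:
  "residual (\<lambda>u v. k u v + \<tau> * delta u v) xs w x z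
     = residual k xs w x z + \<tau> * (delta z x - (\<Sum>i\<in>UNIV. w $ i * delta z (xs i)))"
  by (simp add: residual_def sum.distrib sum_distrib_left algebra_simps)

lemma sum_delta_data:
  assumes "inj xs"
  shows "(\<Sum>i\<in>UNIV. w $ i * delta (xs j) (xs i)) = w $ j"
proof -
  have "(\<Sum>i\<in>UNIV. w $ i * delta (xs j) (xs i)) = (\<Sum>i\<in>UNIV. if i = j then w $ i else 0)"
    using assms by (intro sum.cong) (auto simp: delta_def inj_def)
  then show ?thesis by simp
qed

lemma post_var_nonneg:
  assumes "is_RKHS k H ip" and "\<sigma> \<noteq> 0"
  shows "0 \<le> post_var k \<sigma> xs x"
proof -
  interpret rkhs k H ip by (rule rkhs.intro) fact
  have inv: "invertible (Kmat k xs + \<sigma>\<^sup>2 *\<^sub>R mat 1)"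
    using invertible_Kmat_plus_scaled_id[of "\<sigma>\<^sup>2"] assms(2) by simp
  define w where "w = post_weights k \<sigma> xs x"
  define e where "e = residual k xs w x"
  have "0 \<le> ip e e" unfolding e_def by (rule ip_self_nonneg[OF residual_mem])
  also have "ip e e = e x - (\<Sum>i\<in>UNIV. w $ i * e (xs i))"
    unfolding e_def by (rule ip_residual_right[OF residual_mem])
  also have "\<dots> = post_var k \<sigma> xs x - \<sigma>\<^sup>2 * (w \<bullet> w)"
    using residual_post_weights_at_data[OF kernel_sym inv]
    by (simp add: post_var_eq_residual e_def w_def inner_vec_def sum_distrib_left algebra_simps)
  finally have "\<sigma>\<^sup>2 * (w \<bullet> w) \<le> post_var k \<sigma> xs x" by simp
  moreover have "0 \<le> \<sigma>\<^sup>2 * (w \<bullet> w)" by simp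
  ultimately show ?thesis by linarith
qed

lemma norm_sq_noisy_residual:
  assumes "is_RKHS (\<lambda>u v. k u v + \<sigma>\<^sup>2 * delta u v) H ip"
    and ksym: "\<And>u v. k u v = k v u" and inv: "invertible (Kmat k xs + \<sigma>\<^sup>2 *\<^sub>R mat 1)"
    and "inj xs" and "x \<notin> range xs"
  defines "e \<equiv> residual (\<lambda>u v. k u v + \<sigma>\<^sup>2 * delta u v) xs (post_weights k \<sigma> xs x) x"
  shows "ip e e = post_var k \<sigma> xs x + \<sigma>\<^sup>2"
proof -
  interpret rkhs "\<lambda>u v. k u v + \<sigma>\<^sup>2 * delta u v" H ip by (rule rkhs.intro) fact
  have "delta (xs j) x = 0" and "delta x (xs j) = 0" for j
    using \<open>x \<notin> range xs\<close> by (auto simp: delta_def)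
  then have "e (xs j) = 0" and "e x = post_var k \<sigma> xs x + \<sigma>\<^sup>2" for j
    unfolding e_def residual_plus_delta residual_post_weights_at_data[OF ksym inv]
      post_var_eq_residual
    by (simp_all add: sum_delta_data[OF \<open>inj xs\<close>] delta_def[of x x])
  moreover have "ip e e = e x - (\<Sum>i\<in>UNIV. post_weights k \<sigma> xs x $ i * e (xs i))"
    unfolding e_def by (rule ip_residual_right[OF residual_mem])
  ultimately show ?thesis by simp
qed

theorem mainTheorem15:
  fixes k :: "'a \<Rightarrow> 'a \<Rightarrow> real" and \<sigma> :: real
    and Hk Hd Hs :: "('a \<Rightarrow> real) set"
    and ipk ipd ips :: "('a \<Rightarrow> real) \<Rightarrow> ('a \<Rightarrow> real) \<Rightarrow> real"
    and f g h :: "'a \<Rightarrow> real"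
    and xs :: "'n::finite \<Rightarrow> 'a" and x :: 'a
  assumes "is_kernel k" and "\<sigma> > 0"
    and "is_RKHS k Hk ipk"
    and "is_RKHS (\<lambda>u v. \<sigma>\<^sup>2 * delta u v) Hd ipd"
    and "is_RKHS (\<lambda>u v. k u v + \<sigma>\<^sup>2 * delta u v) Hs ips"
    and "f \<in> Hk" and "g \<in> Hd" and "h = (\<lambda>z. f z + g z)" and "h \<in> Hs"
    and "inj xs"
    and "x \<notin> range xs"
  shows "\<bar>post_mean k \<sigma> xs (\<chi> i. h (xs i)) x - f x\<bar>
           \<le> rkhs_norm ips h * sqrt (post_var k \<sigma> xs x)
             + (rkhs_norm ips h + rkhs_norm ipd g) * \<sigma>"
proof -
  interpret Hk: rkhs k Hk ipk by (rule rkhs.intro) fact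
  interpret Hd: rkhs "\<lambda>u v. \<sigma>\<^sup>2 * delta u v" Hd ipd by (rule rkhs.intro) fact
  interpret Hs: rkhs "\<lambda>u v. k u v + \<sigma>\<^sup>2 * delta u v" Hs ips by (rule rkhs.intro) fact
  have inv: "invertible (Kmat k xs + \<sigma>\<^sup>2 *\<^sub>R mat 1)"
    using Hk.invertible_Kmat_plus_scaled_id[of "\<sigma>\<^sup>2"] \<open>\<sigma> > 0\<close> by simp
  define e where "e = residual (\<lambda>u v. k u v + \<sigma>\<^sup>2 * delta u v) xs (post_weights k \<sigma> xs x) x"
  have "0 \<le> post_var k \<sigma> xs x"
    using post_var_nonneg[OF assms(3), of \<sigma> xs x] \<open>\<sigma> > 0\<close> by simp
  then have norm_e: "rkhs_norm ips e \<le> sqrt (post_var k \<sigma> xs x) + \<sigma>"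
    using norm_sq_noisy_residual[OF assms(5) Hk.kernel_sym inv assms(10,11)]
      sqrt_add_le_add_sqrt[of _ "\<sigma>\<^sup>2"] \<open>\<sigma> > 0\<close>
    by (simp add: rkhs_norm_def e_def)
  have "ips h e = h x - post_mean k \<sigma> xs (\<chi> i. h (xs i)) x"
    using Hs.ip_residual_right[OF \<open>h \<in> Hs\<close>] post_mean_eq_weights[OF Hk.kernel_sym inv]
    by (simp add: e_def inner_vec_def)
  then have "\<bar>h x - post_mean k \<sigma> xs (\<chi> i. h (xs i)) x\<bar> = \<bar>ips h e\<bar>" by simp
  also have "\<dots> \<le> rkhs_norm ips h * rkhs_norm ips e"
    unfolding e_def by (rule Hs.cauchy_schwarz[OF \<open>h \<in> Hs\<close> Hs.residual_mem])
  also have "\<dots> \<le> rkhs_norm ips h * (sqrt (post_var k \<sigma> xs x) + \<sigma>)"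
    by (rule mult_left_mono[OF norm_e Hs.rkhs_norm_nonneg[OF \<open>h \<in> Hs\<close>]])
  finally have "\<bar>h x - post_mean k \<sigma> xs (\<chi> i. h (xs i)) x\<bar>
      \<le> rkhs_norm ips h * (sqrt (post_var k \<sigma> xs x) + \<sigma>)" .
  moreover have "\<bar>g x\<bar> \<le> rkhs_norm ipd g * \<sigma>"
    using Hd.abs_eval_le[OF \<open>g \<in> Hd\<close>, of x] \<open>\<sigma> > 0\<close> by (simp add: delta_def)
  ultimately show ?thesis
    using \<open>h = (\<lambda>z. f z + g z)\<close> by (simp add: algebra_simps)
qed

end
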